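(* Let $f$ be a firm and let $\widehat{Ch}_f:[0,1]^W\to[0,1]^W$ be the function defined below. Then $\widehat{Ch}_f$ is continuous and satisfies the revealed preference property: for any $\mathbf x,\mathbf x'\in[0,1]^W$ with $\mathbf x'\le\mathbf x$, if $\widehat{Ch}_f(\mathbf x)\le\mathbf x'$ then $\widehat{Ch}_f(\mathbf x')=\widehat{Ch}_f(\mathbf x)$.
   Context: $W=\{w_1,\dots,w_n\}$ is a finite set, and firm $f$ has a strict, complete, transitive preference $\succ_f$ over $2^W$; subsets of $W$ are identified with their indicator vectors in $\{0,1\}^W$. Let $\mathbf u^1\succ_f\mathbf u^2\succ_f\cdots\succ_f\mathbf u^L\succ_f\mathbf 0$ be all sets $S$ with $S\succ_f\emptyset$, listed in preference order. For $\mathbf x\in[0,1]^W$ define recursively $t_0=0$, $\mathbf z^0=\mathbf x$, and for $k=1,\dots,L$: $t_k=\min\{1-\sum_{j=0}^{k-1}t_j,\ z^{k-1}_i : i\in\{1,\dots,n\},\ u^k_i\neq0\}$ and $\mathbf z^k=\mathbf z^{k-1}-t_k\mathbf u^k$. Then $\widehat{Ch}_f(\mathbf x)=\sum_{k=1}^L t_k\mathbf u^k$. Vector inequalities are componentwise. *)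

theory Defs
  imports "HOL-Analysis.Analysis"
begin

definition ind :: "'w::finite set \<Rightarrow> real^'w" where
  "ind S = (\<chi> i. if i \<in> S then 1 else 0)"

(* The acceptable sets u^1 \<succ> u^2 \<succ> ... \<succ> u^L (all S with S \<succ> {}), in preference order *)
definition pref_list :: "('w::finite set \<Rightarrow> 'w set \<Rightarrow> bool) \<Rightarrow> 'w set list" where
  "pref_list pref = (THE us. distinct us \<and> set us = {S. pref S {}} \<and> sorted_wrt pref us)"

(* Recursive computation: b = 1 - (t_0 + ... + t_{k-1}) is the remaining budget,
   z = z^{k-1}; t_k = min {b, z_i : u^k_i \<noteq> 0}; z^k = z^{k-1} - t_k u^k. *)
fun ch_aux :: "'w::finite set list \<Rightarrow> real \<Rightarrow> real^'w \<Rightarrow> real^'w" where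
  "ch_aux [] b z = 0"
| "ch_aux (u # us) b z =
     (let t = Min (insert b ((\<lambda>i. z $ i) ` u))
      in t *\<^sub>R ind u + ch_aux us (b - t) (z - t *\<^sub>R ind u))"

definition ch_hat :: "('w::finite set \<Rightarrow> 'w set \<Rightarrow> bool) \<Rightarrow> real^'w \<Rightarrow> real^'w" where
  "ch_hat pref x = ch_aux (pref_list pref) 1 x"

definition unit_cube :: "(real^'w::finite) set" where
  "unit_cube = {x. \<forall>i. 0 \<le> x $ i \<and> x $ i \<le> 1}"

end

theory Submission
  imports Defs
begin

(* Stage k removes the largest multiple t_k of u^k that fits under the remaining vector and
   budget. Each t_k is a minimum of finitely many continuous functions of x, which gives
   continuity. For revealed preference, if the output is below x' <= x, then x' still covers
   t_k u^k plus everything removed before stage k, so at every stage the minimum defining t_k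
   is the same for x' as for x, and both computations coincide. *)

definition step_length :: "real \<Rightarrow> real^'w::finite \<Rightarrow> 'w set \<Rightarrow> real" where
  "step_length b z u = Min (insert b ((\<lambda>i. z $ i) ` u))"

lemma ch_aux_Cons:
  "ch_aux (u # us) b z =
     step_length b z u *\<^sub>R ind u
     + ch_aux us (b - step_length b z u) (z - step_length b z u *\<^sub>R ind u)"
  by (simp add: step_length_def Let_def)

declare ch_aux.simps(2) [simp del]

lemma ind_nth [simp]: "ind u $ i = (if i \<in> u then 1 else 0)"
  by (simp add: ind_def)

lemma continuous_on_Min_insert:
  fixes f :: "'a::topological_space \<Rightarrow> 'b::linorder_topology"
  assumes "finite u" "continuous_on S f" "\<And>i. i \<in> u \<Longrightarrow> continuous_on S (g i)"
  shows "continuous_on S (\<lambda>x. Min (insert (f x) ((\<lambda>i. g i x) ` u)))"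
  using assms
proof (induction u rule: finite_induct)
  case empty
  then show ?case by simp
next
  case (insert a u)
  have "insert (f x) ((\<lambda>i. g i x) ` insert a u)
          = insert (g a x) (insert (f x) ((\<lambda>i. g i x) ` u))" for x
    by auto
  then have "Min (insert (f x) ((\<lambda>i. g i x) ` insert a u))
          = min (g a x) (Min (insert (f x) ((\<lambda>i. g i x) ` u)))" for x
    using insert.hyps(1) by simp
  then show ?case
    using insert.prems insert.IH by (simp add: continuous_on_min)
qed

lemma continuous_on_step_length:
  fixes z :: "'a::topological_space \<Rightarrow> real^'w::finite"
  assumes "continuous_on S b" "continuous_on S z"
  shows "continuous_on S (\<lambda>x. step_length (b x) (z x) u)"
  unfolding step_length_def
  using assms by (intro continuous_on_Min_insert continuous_intros) auto

lemma continuous_on_ch_aux: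
  fixes z :: "'a::topological_space \<Rightarrow> real^'w::finite"
  assumes "continuous_on S b" "continuous_on S z"
  shows "continuous_on S (\<lambda>x. ch_aux us (b x) (z x))"
  using assms
proof (induction us arbitrary: b z)
  case Nil
  then show ?case by simp
next
  case (Cons u us)
  have "continuous_on S (\<lambda>x. step_length (b x) (z x) u)"
    using Cons.prems by (rule continuous_on_step_length)
  then show ?case
    unfolding ch_aux_Cons using Cons.prems by (intro Cons.IH continuous_intros)
qed

lemma step_length_le_budget: "step_length b z u \<le> b"
  by (simp add: step_length_def)

lemma step_length_le_nth: "i \<in> u \<Longrightarrow> step_length b z u \<le> z $ i"
  by (simp add: step_length_def)

lemma step_length_nonneg: "0 \<le> b \<Longrightarrow> 0 \<le> z \<Longrightarrow> 0 \<le> step_length b z u"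
  by (auto simp: step_length_def less_eq_vec_def)

lemma step_residual_nonneg: "0 \<le> z \<Longrightarrow> 0 \<le> z - step_length b z u *\<^sub>R ind u"
  by (auto simp: less_eq_vec_def step_length_le_nth)

lemma step_length_eq_if_covered:
  assumes "z' \<le> z" "\<And>i. i \<in> u \<Longrightarrow> step_length b z u \<le> z' $ i"
  shows "step_length b z' u = step_length b z u"
proof (rule antisym)
  have "step_length b z' u \<le> z' $ i" if "i \<in> u" for i
    using that by (rule step_length_le_nth)
  also have "z' $ i \<le> z $ i" for i
    using assms(1) by (simp add: less_eq_vec_def)
  finally show "step_length b z' u \<le> step_length b z u"
    by (simp add: step_length_def step_length_le_budget)
  show "step_length b z u \<le> step_length b z' u"
    using assms(2) by (simp add: step_length_def [of b z'] step_length_le_budget)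
qed

lemma ch_aux_nonneg:
  fixes z :: "real^'w::finite"
  assumes "0 \<le> b" "0 \<le> z"
  shows "0 \<le> ch_aux us b z"
  using assms
proof (induction us arbitrary: b z)
  case Nil
  then show ?case by simp
next
  case (Cons u us)
  then have "0 \<le> ch_aux us (b - step_length b z u) (z - step_length b z u *\<^sub>R ind u)"
    by (intro Cons.IH step_residual_nonneg) (simp_all add: step_length_le_budget)
  moreover have "0 \<le> step_length b z u *\<^sub>R ind u"
    using step_length_nonneg [OF Cons.prems] by (simp add: less_eq_vec_def)
  ultimately show ?case
    unfolding ch_aux_Cons by simp
qed

lemma ch_aux_revealed_preference:
  fixes z z' :: "real^'w::finite"
  assumes "0 \<le> b" "0 \<le> z" "z' \<le> z" "ch_aux us b z \<le> z'"
  shows "ch_aux us b z' = ch_aux us b z"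
  using assms
proof (induction us arbitrary: b z z')
  case Nil
  then show ?case by simp
next
  case (Cons u us)
  define t where "t = step_length b z u"
  define r where "r = ch_aux us (b - t) (z - t *\<^sub>R ind u)"
  have r_nonneg: "0 \<le> r"
    unfolding r_def t_def using Cons.prems(1,2)
    by (intro ch_aux_nonneg step_residual_nonneg) (simp_all add: step_length_le_budget)
  have below: "t *\<^sub>R ind u + r \<le> z'"
    using Cons.prems(4) by (simp add: ch_aux_Cons t_def r_def)
  have covered: "t \<le> z' $ i" if "i \<in> u" for i
  proof -
    have "t + r $ i \<le> z' $ i"
      using below that by (auto simp: less_eq_vec_def dest: spec [of _ i])
    moreover have "0 \<le> r $ i"
      using r_nonneg by (simp add: less_eq_vec_def)
    ultimately show ?thesis
      by linarith
  qed
  have same_step: "step_length b z' u = t"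
    using step_length_eq_if_covered [OF Cons.prems(3) covered [unfolded t_def]] by (simp add: t_def)
  have "ch_aux us (b - t) (z' - t *\<^sub>R ind u) = r"
    unfolding r_def
  proof (rule Cons.IH)
    show "0 \<le> b - t"
      by (simp add: t_def step_length_le_budget)
    show "0 \<le> z - t *\<^sub>R ind u"
      unfolding t_def using Cons.prems(2) by (rule step_residual_nonneg)
    show "z' - t *\<^sub>R ind u \<le> z - t *\<^sub>R ind u"
      using Cons.prems(3) by simp
    show "ch_aux us (b - t) (z - t *\<^sub>R ind u) \<le> z' - t *\<^sub>R ind u"
      using below by (simp add: r_def less_eq_vec_def algebra_simps)
  qed
  then show ?case
    by (simp add: ch_aux_Cons same_step t_def r_def)
qed

theorem lemma1:
  fixes pref :: "'w::finite set \<Rightarrow> 'w set \<Rightarrow> bool"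
  assumes irrefl: "\<And>S. \<not> pref S S"
    and trans: "\<And>S T U. pref S T \<Longrightarrow> pref T U \<Longrightarrow> pref S U"
    and total: "\<And>S T. S \<noteq> T \<Longrightarrow> pref S T \<or> pref T S"
  shows "continuous_on unit_cube (ch_hat pref)
         \<and> (\<forall>x \<in> unit_cube. \<forall>x' \<in> unit_cube.
              x' \<le> x \<longrightarrow> ch_hat pref x \<le> x' \<longrightarrow> ch_hat pref x' = ch_hat pref x)"
proof
  show "continuous_on unit_cube (ch_hat pref)"
    unfolding ch_hat_def by (intro continuous_on_ch_aux continuous_intros)
  have "0 \<le> x" if "x \<in> unit_cube" for x :: "real^'w"
    using that by (simp add: unit_cube_def less_eq_vec_def)
  then show "\<forall>x \<in> unit_cube. \<forall>x' \<in> unit_cube.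
              x' \<le> x \<longrightarrow> ch_hat pref x \<le> x' \<longrightarrow> ch_hat pref x' = ch_hat pref x"
    unfolding ch_hat_def by (auto intro: ch_aux_revealed_preference)
qed

end
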